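(* Let $V$ be a finite-dimensional complex $S_d$-module, and transport the $\mathrm{GL}(\mathbb{E})$-action on $(V\otimes\mathbb{E}^{\otimes d})^{S_d}$ to $\bigoplus_{\underline{d}\in\mathcal{P}_{n,d}}V^{S_{\underline{d}}}$ via the isomorphism $\Phi$ described in the context. Let $\underline{d}=(d_1,\dots,d_n)\in\mathcal{P}_{n,d}$ and $a\in[n-1]$. If $d_{a+1}\ge1$, then the Chevalley generator $E_a$ maps $V^{S_{\underline{d}}}$ to $V^{S_{\tilde e_a\underline{d}}}$ by $$v\mapsto d_{a+1}\cdot\frac{1}{\#S_{\tilde e_a\underline{d}}}\sum_{w\in S_{\tilde e_a\underline{d}}}w(v).$$ If $d_a\ge1$, then $F_a$ maps $V^{S_{\underline{d}}}$ to $V^{S_{\tilde f_a\underline{d}}}$ by $$v\mapsto d_a\cdot\frac{1}{\#S_{\tilde f_a\underline{d}}}\sum_{w\in S_{\tilde f_a\underline{d}}}w(v).$$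
   Context: Fix integers $n,d\ge1$. Let $\mathcal{P}_{n,d}$ be the set of compositions $\underline{d}=(d_1,\dots,d_n)$, $d_i\ge0$, $\sum d_i=d$. Let $S_{\underline{d}}=S_{d_1}\times\dots\times S_{d_n}\subseteq S_d$ be the subgroup preserving each block $\{d_1+\dots+d_{i-1}+1,\dots,d_1+\dots+d_i\}$. Let $\mathbb{E}=\mathbb{C}^n$ with basis $\theta_1,\dots,\theta_n$, and set $\theta_{\underline{d}}=\theta_1^{\otimes d_1}\otimes\dots\otimes\theta_n^{\otimes d_n}\in\mathbb{E}^{\otimes d}$. The group $S_d$ acts on $V\otimes\mathbb{E}^{\otimes d}$ diagonally, permuting tensor factors on $\mathbb{E}^{\otimes d}$, and $\mathrm{GL}(\mathbb{E})$ acts on $\mathbb{E}^{\otimes d}$; these actions commute. The isomorphism $\Phi:\bigoplus_{\underline{d}}V^{S_{\underline{d}}}\xrightarrow{\sim}(V\otimes\mathbb{E}^{\otimes d})^{S_d}$ sends $v\in V^{S_{\underline{d}}}$ to $\frac{1}{\#S_d}\sum_{x\in S_d}x(v)\otimes x(\theta_{\underline{d}})$. It identifies $V^{S_{\underline{d}}}$ with the $\underline{d}$-weight space, using the trivialization of the line spanned by $\theta_{\underline{d}}$. The Chevalley generators are $E_a\theta_{a+1}=\theta_a$, $E_a\theta_i=0$ for $i\ne a+1$, and $F_a\theta_a=\theta_{a+1}$, $F_a\theta_i=0$ for $i\ne a$. The composition $\tilde e_a\underline{d}$ replaces $(d_a,d_{a+1})$ by $(d_a+1,d_{a+1}-1)$,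 and $\tilde f_a\underline{d}$ replaces $(d_a,d_{a+1})$ by $(d_a-1,d_{a+1}+1)$. *)

theory Defs
  imports "HOL-Analysis.Analysis"
begin

text \<open>Conventions (0-based): positions of tensor factors are 0..d-1, basis vectors of E
  are theta_0..theta_{n-1}.  V is modelled as complex^'m (a finite-dimensional complex space,
  any such is isomorphic to one of these) with representation rho given by matrices.\<close>

definition compositions :: "nat \<Rightarrow> nat \<Rightarrow> (nat \<Rightarrow> nat) set" where
  "compositions n d = {c. (\<forall>i\<ge>n. c i = 0) \<and> (\<Sum>i<n. c i) = d}"

definition block :: "(nat \<Rightarrow> nat) \<Rightarrow> nat \<Rightarrow> nat set" where
  "block c i = {(\<Sum>k<i. c k) ..< (\<Sum>k<Suc i. c k)}"

definition Sym :: "nat \<Rightarrow> (nat \<Rightarrow> nat) set" where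
  "Sym d = {x. x permutes {..<d}}"

definition young :: "nat \<Rightarrow> nat \<Rightarrow> (nat \<Rightarrow> nat) \<Rightarrow> (nat \<Rightarrow> nat) set" where
  "young n d c = {x. x permutes {..<d} \<and> (\<forall>i<n. x ` block c i = block c i)}"

definition etil :: "nat \<Rightarrow> (nat \<Rightarrow> nat) \<Rightarrow> (nat \<Rightarrow> nat)" where
  "etil a c = c(a := c a + 1, Suc a := c (Suc a) - 1)"

definition ftil :: "nat \<Rightarrow> (nat \<Rightarrow> nat) \<Rightarrow> (nat \<Rightarrow> nat)" where
  "ftil a c = c(a := c a - 1, Suc a := c (Suc a) + 1)"

text \<open>Basis of E^{\<otimes>d}: words u : {..<d} -> {..<n}, extended by 0 outside {..<d}.
  The word of theta_c = theta_0^{c_0} ... theta_{n-1}^{c_{n-1}}.\<close>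
definition thetaw :: "nat \<Rightarrow> (nat \<Rightarrow> nat) \<Rightarrow> nat \<Rightarrow> nat" where
  "thetaw d c j = (if j < d then (LEAST i. j \<in> block c i) else 0)"

text \<open>Elements of V \<otimes> E^{\<otimes>d} are coefficient functions words => V.
  A permutation x sends theta_{u} to theta_{u o x^{-1}} (factor at position j moves to x j).\<close>
type_synonym 'm tens = "(nat \<Rightarrow> nat) \<Rightarrow> complex ^ 'm::finite"

text \<open>Phi on a single summand V^{S_c}: v |-> 1/#S_d sum_x x(v) \<otimes> x(theta_c).\<close>
definition Phi_c :: "nat \<Rightarrow> ((nat \<Rightarrow> nat) \<Rightarrow> complex ^ 'm::finite ^ 'm) \<Rightarrow> (nat \<Rightarrow> nat)
    \<Rightarrow> complex ^ 'm::finite \<Rightarrow> ('m::finite) tens" where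
  "Phi_c d rho c v = (\<lambda>u. (1 / of_nat (card (Sym d))) *s
      (\<Sum>x\<in>Sym d. if thetaw d c \<circ> inv x = u then rho x *v v else 0))"

definition Phi :: "nat \<Rightarrow> nat \<Rightarrow> ((nat \<Rightarrow> nat) \<Rightarrow> complex ^ 'm::finite ^ 'm)
    \<Rightarrow> ((nat \<Rightarrow> nat) \<Rightarrow> complex ^ 'm::finite) \<Rightarrow> ('m::finite) tens" where
  "Phi n d rho f = (\<lambda>u. \<Sum>c\<in>compositions n d. Phi_c d rho c (f c) u)"

text \<open>Chevalley generators of gl(E) acting on V \<otimes> E^{\<otimes>d} (trivially on V, as a derivation on
  the tensor power): E_a theta_{a+1} = theta_a, F_a theta_a = theta_{a+1}.\<close>
definition Eop :: "nat \<Rightarrow> nat \<Rightarrow> ('m::finite) tens \<Rightarrow> ('m::finite) tens" where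
  "Eop d a T = (\<lambda>u. \<Sum>j\<in>{j. j < d \<and> u j = a}. T (u(j := Suc a)))"

definition Fop :: "nat \<Rightarrow> nat \<Rightarrow> ('m::finite) tens \<Rightarrow> ('m::finite) tens" where
  "Fop d a T = (\<lambda>u. \<Sum>j\<in>{j. j < d \<and> u j = Suc a}. T (u(j := a)))"

definition invariants :: "((nat \<Rightarrow> nat) \<Rightarrow> complex ^ 'm::finite ^ 'm) \<Rightarrow> (nat \<Rightarrow> nat) set
    \<Rightarrow> (complex ^ 'm::finite) set" where
  "invariants rho G = {v. \<forall>x\<in>G. rho x *v v = v}"

definition is_Sd_rep :: "nat \<Rightarrow> ((nat \<Rightarrow> nat) \<Rightarrow> complex ^ 'm::finite ^ 'm) \<Rightarrow> bool" where
  "is_Sd_rep d rho \<longleftrightarrow> rho id = mat 1 \<and>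
     (\<forall>x\<in>Sym d. \<forall>y\<in>Sym d. rho (x \<circ> y) = rho x ** rho y)"

definition single :: "(nat \<Rightarrow> nat) \<Rightarrow> complex ^ 'm::finite \<Rightarrow> (nat \<Rightarrow> nat) \<Rightarrow> complex ^ 'm::finite" where
  "single c v = (\<lambda>c'. if c' = c then v else 0)"

end

theory Submission
  imports Defs
begin

(* Phi(v) = (1/d!) sum_x x(v) \<otimes> theta_{w o x^-1}, where w is the word of theta_c, so the
   coefficient of Phi(v) at a word u is the sum of x(v) over the x with w o x^-1 = u.  The derivation
   e_{alpha beta} replaces one letter beta of u by alpha in all possible ways; substituting j = x q for
   the changed position turns the result into a sum, over the positions q of the beta-block of c, of
   the coefficients for the word w with letter q changed to alpha.  Since v is fixed by the
   transpositions of that block, these c_beta terms all equal the one at the block boundary p, where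
   the changed word is the word of c'.  Finally, averaging v over S_c' does not change these
   coefficients, because S_c' fixes the word of c'. *)

lemma comp_inv_update_eq_iff:
  assumes x: "bij x"
  shows "(u (x q) = \<alpha> \<and> th \<circ> inv x = u(x q := \<beta>)) \<longleftrightarrow> (th q = \<beta> \<and> th(q := \<alpha>) \<circ> inv x = u)"
proof -
  have inv_eq: "inv x y = q \<longleftrightarrow> y = x q" for y
    using x by (metis bij_inv_eq_iff)
  have "th(q := \<alpha>) \<circ> inv x = (th \<circ> inv x)(x q := \<alpha>)"
    by (auto simp: fun_eq_iff inv_eq)
  moreover have "(th \<circ> inv x) (x q) = th q"
    using x by (simp add: bij_is_inj)
  ultimately show ?thesis
    by (auto simp: fun_eq_iff)
qed

lemma sum_vector_const: "(\<Sum>i\<in>I. x) = of_nat (card I) *s (x :: 'a::semiring_1 ^ 'n)"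
  unfolding vec_eq_iff sum_component by simp

definition partial_sum :: "(nat \<Rightarrow> nat) \<Rightarrow> nat \<Rightarrow> nat" where
  "partial_sum c i = (\<Sum>k<i. c k)"

lemma block_eq: "block c i = {partial_sum c i ..< partial_sum c (Suc i)}"
  unfolding block_def partial_sum_def ..

lemma partial_sum_0 [simp]: "partial_sum c 0 = 0"
  unfolding partial_sum_def by simp

lemma partial_sum_Suc: "partial_sum c (Suc i) = partial_sum c i + c i"
  unfolding partial_sum_def by simp

lemma partial_sum_mono: "i \<le> j \<Longrightarrow> partial_sum c i \<le> partial_sum c j"
  unfolding partial_sum_def by (rule sum_mono2) auto

lemma partial_sum_compositions: "c \<in> compositions n d \<Longrightarrow> partial_sum c n = d"
  unfolding partial_sum_def compositions_def by simp

lemma thetaw_eqI: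
  assumes "partial_sum c i \<le> j" "j < partial_sum c (Suc i)" "j < d"
  shows "thetaw d c j = i"
proof -
  have "(LEAST i. j \<in> block c i) = i"
  proof (rule Least_equality)
    show "j \<in> block c i"
      using assms by (simp add: block_eq)
  next
    fix i' assume "j \<in> block c i'"
    then have "j < partial_sum c (Suc i')"
      by (simp add: block_eq)
    then show "i \<le> i'"
      using assms(1) partial_sum_mono[of "Suc i'" i c] by linarith
  qed
  then show ?thesis
    using assms(3) by (simp add: thetaw_def)
qed

lemma thetaw_in_block:
  assumes c: "c \<in> compositions n d" and j: "j < d"
  shows "thetaw d c j < n" "j \<in> block c (thetaw d c j)"
proof -
  have ex: "j < partial_sum c n"
    using partial_sum_compositions[OF c] j by simp
  define i where "i = (LEAST i. j < partial_sum c (Suc i))"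
  have n0: "n \<noteq> 0"
    using ex by (intro notI) simp
  then have ex': "j < partial_sum c (Suc (n - 1))"
    using ex by simp
  then have upper: "j < partial_sum c (Suc i)" and "i \<le> n - 1"
    unfolding i_def by (rule LeastI, rule Least_le)
  have lower: "partial_sum c i \<le> j"
  proof (cases i)
    case (Suc i')
    then have "\<not> j < partial_sum c (Suc i')"
      unfolding i_def by (metis lessI not_less_Least)
    then show ?thesis
      using Suc by simp
  qed simp
  have "thetaw d c j = i"
    using lower upper j by (rule thetaw_eqI)
  then show "thetaw d c j < n" "j \<in> block c (thetaw d c j)"
    using \<open>i \<le> n - 1\<close> n0 lower upper by (auto simp: block_eq)
qed

lemma thetaw_eq_iff_in_block:
  assumes c: "c \<in> compositions n d" and j: "j < d"
  shows "thetaw d c j = i \<longleftrightarrow> j \<in> block c i"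
  using thetaw_in_block[OF c j] thetaw_eqI[of c i j d] j by (auto simp: block_eq)

lemma block_subset:
  assumes c: "c \<in> compositions n d" and i: "i < n"
  shows "block c i \<subseteq> {..<d}"
  using partial_sum_mono[of "Suc i" n c] i partial_sum_compositions[OF c] by (auto simp: block_eq)

lemma card_thetaw_fiber:
  assumes c: "c \<in> compositions n d" and i: "i < n"
  shows "card {q. q < d \<and> thetaw d c q = i} = c i"
proof -
  have "{q. q < d \<and> thetaw d c q = i} = block c i"
    using thetaw_eq_iff_in_block[OF c] block_subset[OF c i] by auto
  then show ?thesis
    by (simp add: block_eq partial_sum_Suc)
qed

lemma thetaw_move_boundary:
  assumes c: "c \<in> compositions n d" and c': "c' \<in> compositions n d"
    and p: "p < d" and p': "thetaw d c' p = \<alpha>"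
    and same: "\<And>i j. j \<noteq> p \<Longrightarrow> partial_sum c i \<le> j \<longleftrightarrow> partial_sum c' i \<le> j"
  shows "thetaw d c' = (thetaw d c)(p := \<alpha>)"
proof
  fix j
  show "thetaw d c' j = ((thetaw d c)(p := \<alpha>)) j"
  proof (cases "j = p \<or> d \<le> j")
    case True
    then show ?thesis
      using p p' by (auto simp: thetaw_def)
  next
    case False
    then have "j \<in> block c i \<longleftrightarrow> j \<in> block c' i" for i
      using same[of j i] same[of j "Suc i"] by (auto simp: block_eq)
    moreover have "j < d"
      using False by simp
    ultimately have "thetaw d c' j = thetaw d c j"
      using thetaw_eq_iff_in_block[OF c, of j "thetaw d c j"]
        thetaw_eq_iff_in_block[OF c', of j "thetaw d c j"] by simp
    then show ?thesis
      using False by simp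
  qed
qed

lemma partial_sum_etil:
  assumes "1 \<le> c (Suc a)"
  shows "partial_sum (etil a c) i = partial_sum c i + (if i = Suc a then 1 else 0)"
  using assms by (induction i) (auto simp: partial_sum_Suc etil_def)

lemma partial_sum_ftil:
  assumes "1 \<le> c a"
  shows "partial_sum (ftil a c) i = partial_sum c i - (if i = Suc a then 1 else 0)"
proof (induction i)
  case (Suc i)
  have "1 \<le> partial_sum c (Suc a)"
    using assms by (simp add: partial_sum_Suc)
  then show ?case
    using Suc assms by (auto simp: partial_sum_Suc ftil_def)
qed simp

lemma etil_in_compositions:
  assumes c: "c \<in> compositions n d" and a: "Suc a < n" and ca: "1 \<le> c (Suc a)"
  shows "etil a c \<in> compositions n d"
proof -
  have "partial_sum (etil a c) n = d"
    using partial_sum_etil[of c a, OF ca, of n] partial_sum_compositions[OF c] a by simp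
  moreover have "\<forall>i\<ge>n. etil a c i = 0"
    using c a by (auto simp: compositions_def etil_def)
  ultimately show ?thesis
    by (simp add: compositions_def partial_sum_def)
qed

lemma ftil_in_compositions:
  assumes c: "c \<in> compositions n d" and a: "Suc a < n" and ca: "1 \<le> c a"
  shows "ftil a c \<in> compositions n d"
proof -
  have "partial_sum (ftil a c) n = d"
    using partial_sum_ftil[of c a, OF ca, of n] partial_sum_compositions[OF c] a by simp
  moreover have "\<forall>i\<ge>n. ftil a c i = 0"
    using c a by (auto simp: compositions_def ftil_def)
  ultimately show ?thesis
    by (simp add: compositions_def partial_sum_def)
qed

lemma thetaw_etil:
  assumes c: "c \<in> compositions n d" and a: "Suc a < n" and ca: "1 \<le> c (Suc a)"
  defines "p \<equiv> partial_sum c (Suc a)"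
  shows "p < d" "thetaw d c p = Suc a" "thetaw d (etil a c) = (thetaw d c)(p := a)"
proof -
  have "partial_sum c (Suc (Suc a)) \<le> d"
    using partial_sum_mono[of "Suc (Suc a)" n c] a partial_sum_compositions[OF c] by simp
  then show pd: "p < d"
    using ca by (simp add: p_def partial_sum_Suc[of c "Suc a"])
  show "thetaw d c p = Suc a"
    using pd ca by (intro thetaw_eqI) (auto simp: p_def partial_sum_Suc[of c "Suc a"])
  have p': "thetaw d (etil a c) p = a"
    using pd ca by (intro thetaw_eqI) (auto simp: p_def partial_sum_etil[of c a, OF ca] partial_sum_Suc[of c a])
  show "thetaw d (etil a c) = (thetaw d c)(p := a)"
    by (rule thetaw_move_boundary[OF c etil_in_compositions[OF c a ca] pd p'])
      (auto simp: partial_sum_etil[of c a, OF ca] p_def)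
qed

lemma thetaw_ftil:
  assumes c: "c \<in> compositions n d" and a: "Suc a < n" and ca: "1 \<le> c a"
  defines "p \<equiv> partial_sum c (Suc a) - 1"
  shows "p < d" "thetaw d c p = a" "thetaw d (ftil a c) = (thetaw d c)(p := Suc a)"
proof -
  have ps: "1 \<le> partial_sum c (Suc a)" "partial_sum c (Suc a) \<le> partial_sum c (Suc (Suc a))"
    using ca by (simp_all add: partial_sum_Suc)
  have "partial_sum c (Suc a) \<le> d"
    using partial_sum_mono[of "Suc a" n c] a partial_sum_compositions[OF c] by simp
  then show pd: "p < d"
    using ps by (simp add: p_def)
  show "thetaw d c p = a"
    using pd ca ps by (intro thetaw_eqI) (auto simp: p_def partial_sum_Suc[of c a])
  have p': "thetaw d (ftil a c) p = Suc a"
    using pd ps by (intro thetaw_eqI) (auto simp: p_def partial_sum_ftil[of c a, OF ca])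
  show "thetaw d (ftil a c) = (thetaw d c)(p := Suc a)"
    by (rule thetaw_move_boundary[OF c ftil_in_compositions[OF c a ca] pd p'])
      (use ps(1) in \<open>auto simp: partial_sum_ftil[of c a, OF ca] p_def\<close>)
qed

lemma finite_compositions: "finite (compositions n d)"
proof (rule finite_subset)
  show "compositions n d \<subseteq> {f. \<forall>x. (x \<in> {..<n} \<longrightarrow> f x \<in> {..d}) \<and> (x \<notin> {..<n} \<longrightarrow> f x = 0)}"
  proof (intro subsetI CollectI allI conjI impI)
    fix f x assume f: "f \<in> compositions n d"
    show "f x = 0" if "x \<notin> {..<n}"
      using f that by (simp add: compositions_def)
    show "f x \<in> {..d}" if "x \<in> {..<n}"
      using f that member_le_sum[of x "{..<n}" f] by (simp add: compositions_def)
  qed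
qed (intro finite_set_of_finite_funs; simp)

lemma young_subset_Sym: "young n d c \<subseteq> Sym d"
  unfolding young_def Sym_def by auto

lemma id_in_young: "id \<in> young n d c"
  unfolding young_def by (simp add: permutes_id)

lemma young_compose:
  assumes "y \<in> young n d c" "w \<in> young n d c"
  shows "y \<circ> w \<in> young n d c"
proof -
  have "(y \<circ> w) ` block c i = block c i" if "i < n" for i
    using assms that unfolding young_def image_comp[symmetric] by simp
  then show ?thesis
    using assms unfolding young_def by (simp add: permutes_compose)
qed

lemma young_inv:
  assumes y: "y \<in> young n d c"
  shows "inv y \<in> young n d c"
proof -
  have yp: "y permutes {..<d}" and yb: "\<forall>i<n. y ` block c i = block c i"
    using y by (auto simp: young_def)
  have "inv y ` block c i = block c i" if "i < n" for i
    using image_inv_f_f[OF permutes_inj[OF yp], of "block c i"] yb that by simp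
  then show ?thesis
    using permutes_inv[OF yp] by (simp add: young_def)
qed

lemma finite_young: "finite (young n d c)"
  by (rule finite_subset[OF young_subset_Sym]) (simp add: Sym_def finite_permutations)

lemma sum_young_compose_left:
  assumes y: "y \<in> young n d c"
  shows "(\<Sum>w\<in>young n d c. f (y \<circ> w)) = (\<Sum>w\<in>young n d c. f w)"
proof (rule sum.reindex_bij_witness[where i="\<lambda>w. inv y \<circ> w" and j="\<lambda>w. y \<circ> w"])
  have yp: "y permutes {..<d}"
    using y young_subset_Sym by (auto simp: Sym_def)
  fix w assume w: "w \<in> young n d c"
  show "inv y \<circ> (y \<circ> w) = w" "y \<circ> (inv y \<circ> w) = w"
    using yp by (simp_all add: o_assoc permutes_inv_o)
  show "y \<circ> w \<in> young n d c" "inv y \<circ> w \<in> young n d c"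
    using y w young_inv[OF y] by (simp_all add: young_compose)
qed simp

lemma invariants_scale: "v \<in> invariants rho G \<Longrightarrow> k *s v \<in> invariants rho G"
  unfolding invariants_def by (simp add: vec.scale)

lemma young_sum_in_invariants:
  assumes rep: "is_Sd_rep d rho"
  shows "(\<Sum>w\<in>young n d c. rho w *v v) \<in> invariants rho (young n d c)"
  unfolding invariants_def
proof (intro CollectI ballI)
  fix y assume y: "y \<in> young n d c"
  have "rho y *v (\<Sum>w\<in>young n d c. rho w *v v) = (\<Sum>w\<in>young n d c. rho (y \<circ> w) *v v)"
    using rep y young_subset_Sym[THEN subsetD]
    by (auto simp: vec.sum is_Sd_rep_def matrix_vector_mul_assoc intro!: sum.cong)
  also have "\<dots> = (\<Sum>w\<in>young n d c. rho w *v v)"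
    using y by (rule sum_young_compose_left)
  finally show "rho y *v (\<Sum>w\<in>young n d c. rho w *v v) = (\<Sum>w\<in>young n d c. rho w *v v)" .
qed

lemma thetaw_comp_young:
  assumes c: "c \<in> compositions n d" and w: "w \<in> young n d c"
  shows "thetaw d c \<circ> w = thetaw d c"
proof
  fix j
  have wp: "w permutes {..<d}" and wb: "\<forall>i<n. w ` block c i = block c i"
    using w by (auto simp: young_def)
  show "(thetaw d c \<circ> w) j = thetaw d c j"
  proof (cases "j < d")
    case True
    then have "w j \<in> block c (thetaw d c j)" "w j < d"
      using thetaw_in_block[OF c True] wb permutes_in_image[OF wp] by auto
    then show ?thesis
      using thetaw_eq_iff_in_block[OF c] by simp
  next
    case False
    then show ?thesis
      using permutes_not_in[OF wp] by simp
  qed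
qed

lemma transpose_in_young:
  assumes c: "c \<in> compositions n d" and i: "i < n" and pq: "p \<in> block c i" "q \<in> block c i"
  shows "Transposition.transpose p q \<in> young n d c"
proof -
  have "p < d" "q < d"
    using block_subset[OF c i] pq by auto
  then have "p \<in> block c k \<longleftrightarrow> q \<in> block c k" for k
    using thetaw_eq_iff_in_block[OF c] pq by metis
  then show ?thesis
    unfolding young_def using \<open>p < d\<close> \<open>q < d\<close> by (simp add: permutes_swap_id)
qed

(* the coefficient at the word u of sum_x x(v) \<otimes> x(theta_th), as x(theta_th) = theta_{th o x^-1} *)
definition orbit_coeff :: "nat \<Rightarrow> ((nat \<Rightarrow> nat) \<Rightarrow> complex ^ 'm::finite ^ 'm) \<Rightarrow> (nat \<Rightarrow> nat)
    \<Rightarrow> (nat \<Rightarrow> nat) \<Rightarrow> complex ^ 'm \<Rightarrow> complex ^ 'm" where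
  "orbit_coeff d rho th u v = (\<Sum>x\<in>Sym d. if th \<circ> inv x = u then rho x *v v else 0)"

lemma orbit_coeff_scale: "orbit_coeff d rho th u (k *s v) = k *s orbit_coeff d rho th u v"
  unfolding orbit_coeff_def by (simp add: vec.scale if_distrib sum_cmul[symmetric] cong: if_cong)

lemma orbit_coeff_sum: "orbit_coeff d rho th u (\<Sum>w\<in>W. f w) = (\<Sum>w\<in>W. orbit_coeff d rho th u (f w))"
  unfolding orbit_coeff_def vec.sum by (subst sum.swap) (rule sum.cong; auto)

lemma orbit_coeff_compose_inv:
  assumes hom: "\<forall>x\<in>Sym d. \<forall>y\<in>Sym d. rho (x \<circ> y) = rho x ** rho y" and w: "w \<in> Sym d"
  shows "orbit_coeff d rho (th \<circ> inv w) u (rho w *v v) = orbit_coeff d rho th u v"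
proof -
  have wp: "w permutes {..<d}"
    using w by (simp add: Sym_def)
  have "orbit_coeff d rho th u v
      = (\<Sum>x\<in>Sym d. if th \<circ> inv (x \<circ> w) = u then rho (x \<circ> w) *v v else 0)"
    unfolding orbit_coeff_def Sym_def by (rule sum_permutations_compose_right[OF wp])
  also have "\<dots> = orbit_coeff d rho (th \<circ> inv w) u (rho w *v v)"
    unfolding orbit_coeff_def
  proof (rule sum.cong[OF refl])
    fix x assume x: "x \<in> Sym d"
    have "inv (x \<circ> w) = inv w \<circ> inv x"
      using x wp by (simp add: Sym_def o_inv_distrib permutes_bij)
    moreover have "rho (x \<circ> w) *v v = rho x *v (rho w *v v)"
      using hom x w by (simp add: matrix_vector_mul_assoc)
    ultimately show "(if th \<circ> inv (x \<circ> w) = u then rho (x \<circ> w) *v v else 0)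
        = (if th \<circ> inv w \<circ> inv x = u then rho x *v (rho w *v v) else 0)"
      by (simp add: o_assoc)
  qed
  finally show ?thesis ..
qed

lemma orbit_coeff_stabiliser:
  assumes hom: "\<forall>x\<in>Sym d. \<forall>y\<in>Sym d. rho (x \<circ> y) = rho x ** rho y"
    and w: "w \<in> Sym d" and th: "th \<circ> w = th"
  shows "orbit_coeff d rho th u (rho w *v v) = orbit_coeff d rho th u v"
proof -
  have "th \<circ> inv w = th"
    using w th by (metis Sym_def mem_Collect_eq permutes_inv_o(1) o_assoc o_id)
  then show ?thesis
    using orbit_coeff_compose_inv[OF hom w, of th] by simp
qed

lemma sum_orbit_coeff_update:
  "(\<Sum>j\<in>{j. j < d \<and> u j = \<alpha>}. orbit_coeff d rho th (u(j := \<beta>)) v)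
     = (\<Sum>q\<in>{q. q < d \<and> th q = \<beta>}. orbit_coeff d rho (th(q := \<alpha>)) u v)"
proof -
  have "(\<Sum>j\<in>{j. j < d \<and> u j = \<alpha>}. if th \<circ> inv x = u(j := \<beta>) then rho x *v v else 0)
      = (\<Sum>q\<in>{q. q < d \<and> th q = \<beta>}. if th(q := \<alpha>) \<circ> inv x = u then rho x *v v else 0)"
    if x: "x \<in> Sym d" for x
  proof -
    have xp: "x permutes {..<d}"
      using x by (simp add: Sym_def)
    have "(\<Sum>j\<in>{j. j < d \<and> u j = \<alpha>}. if th \<circ> inv x = u(j := \<beta>) then rho x *v v else 0)
        = (\<Sum>j<d. if u j = \<alpha> \<and> th \<circ> inv x = u(j := \<beta>) then rho x *v v else 0)"
      by (simp add: sum.inter_filter[symmetric] conj_commute if_distrib cong: if_cong)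
    also have "\<dots> = (\<Sum>q<d. if u (x q) = \<alpha> \<and> th \<circ> inv x = u(x q := \<beta>) then rho x *v v else 0)"
      using sum.permute[OF xp] by (simp add: comp_def)
    also have "\<dots> = (\<Sum>q<d. if th q = \<beta> \<and> th(q := \<alpha>) \<circ> inv x = u then rho x *v v else 0)"
      using comp_inv_update_eq_iff[OF permutes_bij[OF xp], of u _ \<alpha> th \<beta>] by simp
    also have "\<dots> = (\<Sum>q\<in>{q. q < d \<and> th q = \<beta>}. if th(q := \<alpha>) \<circ> inv x = u then rho x *v v else 0)"
      by (simp add: sum.inter_filter[symmetric] conj_commute if_distrib cong: if_cong)
    finally show ?thesis .
  qed
  then show ?thesis
    unfolding orbit_coeff_def by (subst (1 2) sum.swap) (rule sum.cong, simp_all)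
qed

lemma sum_orbit_coeff_update_invariant:
  assumes hom: "\<forall>x\<in>Sym d. \<forall>y\<in>Sym d. rho (x \<circ> y) = rho x ** rho y"
    and p: "p < d" "th p = \<beta>"
    and v: "\<And>q. q < d \<Longrightarrow> th q = \<beta> \<Longrightarrow> rho (Transposition.transpose p q) *v v = v"
  shows "(\<Sum>j\<in>{j. j < d \<and> u j = \<alpha>}. orbit_coeff d rho th (u(j := \<beta>)) v)
       = of_nat (card {q. q < d \<and> th q = \<beta>}) *s orbit_coeff d rho (th(p := \<alpha>)) u v"
proof -
  have "orbit_coeff d rho (th(q := \<alpha>)) u v = orbit_coeff d rho (th(p := \<alpha>)) u v"
    if q: "q < d" "th q = \<beta>" for q
  proof -
    define \<tau> where "\<tau> = Transposition.transpose p q"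
    have \<tau>: "\<tau> \<in> Sym d"
      using p q by (simp add: \<tau>_def Sym_def permutes_swap_id)
    have "th(q := \<alpha>) = th(p := \<alpha>) \<circ> inv \<tau>"
      using p q by (auto simp: \<tau>_def fun_eq_iff Transposition.transpose_def)
    moreover have "rho \<tau> *v v = v"
      using v[OF q] by (simp add: \<tau>_def)
    ultimately have "orbit_coeff d rho (th(q := \<alpha>)) u v
        = orbit_coeff d rho (th(p := \<alpha>) \<circ> inv \<tau>) u (rho \<tau> *v v)"
      by simp
    also have "\<dots> = orbit_coeff d rho (th(p := \<alpha>)) u v"
      by (rule orbit_coeff_compose_inv[OF hom \<tau>])
    finally show ?thesis .
  qed
  then show ?thesis
    by (simp add: sum_orbit_coeff_update sum_vector_const del: sum_constant)
qed

lemma orbit_coeff_young_sum: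
  assumes hom: "\<forall>x\<in>Sym d. \<forall>y\<in>Sym d. rho (x \<circ> y) = rho x ** rho y"
    and c: "c \<in> compositions n d"
  shows "orbit_coeff d rho (thetaw d c) u (\<Sum>w\<in>young n d c. rho w *v v)
       = of_nat (card (young n d c)) *s orbit_coeff d rho (thetaw d c) u v"
proof -
  have "orbit_coeff d rho (thetaw d c) u (rho w *v v) = orbit_coeff d rho (thetaw d c) u v"
    if w: "w \<in> young n d c" for w
    using orbit_coeff_stabiliser[OF hom] young_subset_Sym thetaw_comp_young[OF c w] w by blast
  then show ?thesis
    by (simp add: orbit_coeff_sum sum_vector_const del: sum_constant)
qed

lemma Phi_single:
  assumes c: "c \<in> compositions n d"
  shows "Phi n d rho (single c v) u = (1 / of_nat (card (Sym d))) *s orbit_coeff d rho (thetaw d c) u v"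
proof -
  have "Phi_c d rho c' 0 u = 0" for c'
    unfolding Phi_c_def by (simp only: matrix_vector_mult_0_right) simp
  then have "Phi n d rho (single c v) u = (\<Sum>c'\<in>compositions n d. if c' = c then Phi_c d rho c v u else 0)"
    unfolding Phi_def single_def by (intro sum.cong) auto
  also have "\<dots> = Phi_c d rho c v u"
    using c finite_compositions by simp
  finally show ?thesis
    unfolding Phi_c_def orbit_coeff_def .
qed

(* the matrix unit theta_beta |-> theta_alpha, acting on E^{\<otimes>d} as a derivation *)
definition matrix_unit_op :: "nat \<Rightarrow> nat \<Rightarrow> nat \<Rightarrow> ('m::finite) tens \<Rightarrow> 'm tens" where
  "matrix_unit_op d \<alpha> \<beta> T = (\<lambda>u. \<Sum>j\<in>{j. j < d \<and> u j = \<alpha>}. T (u(j := \<beta>)))"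

lemma Eop_eq_matrix_unit_op: "Eop d a = matrix_unit_op d a (Suc a)"
  unfolding Eop_def matrix_unit_op_def ..

lemma Fop_eq_matrix_unit_op: "Fop d a = matrix_unit_op d (Suc a) a"
  unfolding Fop_def matrix_unit_op_def ..

lemma matrix_unit_op_Phi_single:
  assumes rep: "is_Sd_rep d rho"
    and c: "c \<in> compositions n d" and c': "c' \<in> compositions n d"
    and v: "v \<in> invariants rho (young n d c)"
    and p: "p < d" "thetaw d c p = \<beta>" and \<beta>: "\<beta> < n"
    and c'_thetaw: "thetaw d c' = (thetaw d c)(p := \<alpha>)"
  shows "matrix_unit_op d \<alpha> \<beta> (Phi n d rho (single c v))
       = Phi n d rho (single c' (of_nat (c \<beta>) *s ((1 / of_nat (card (young n d c'))) *s
                                   (\<Sum>w\<in>young n d c'. rho w *v v))))"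
    (is "?lhs = ?rhs")
proof
  fix u
  have hom: "\<forall>x\<in>Sym d. \<forall>y\<in>Sym d. rho (x \<circ> y) = rho x ** rho y"
    using rep by (simp add: is_Sd_rep_def)
  have v_transpose: "rho (Transposition.transpose p q) *v v = v" if "q < d" "thetaw d c q = \<beta>" for q
  proof -
    have "p \<in> block c \<beta>" "q \<in> block c \<beta>"
      using p that thetaw_eq_iff_in_block[OF c] by auto
    then show ?thesis
      using v transpose_in_young[OF c \<beta>] by (simp add: invariants_def)
  qed
  have young_nonempty: "card (young n d c') \<noteq> 0"
    using finite_young id_in_young by (metis card_0_eq empty_iff)
  let ?N = "1 / of_nat (card (Sym d)) :: complex"
  have "?lhs u = ?N *s (\<Sum>j\<in>{j. j < d \<and> u j = \<alpha>}. orbit_coeff d rho (thetaw d c) (u(j := \<beta>)) v)"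
    by (simp add: matrix_unit_op_def Phi_single[OF c] sum_cmul)
  also have "\<dots> = ?N *s (of_nat (c \<beta>) *s orbit_coeff d rho (thetaw d c') u v)"
    using sum_orbit_coeff_update_invariant[where th = "thetaw d c", OF hom p v_transpose]
    by (simp add: card_thetaw_fiber[OF c \<beta>] c'_thetaw)
  also have "\<dots> = ?rhs u"
    using young_nonempty
    by (simp add: Phi_single[OF c'] orbit_coeff_scale orbit_coeff_young_sum[OF hom c'] vector_smult_assoc)
  finally show "?lhs u = ?rhs u" .
qed

theorem mainTheorem3:
  fixes rho :: "(nat \<Rightarrow> nat) \<Rightarrow> complex ^ 'm::finite ^ 'm"
    and n d a :: nat and c :: "nat \<Rightarrow> nat" and v :: "complex ^ 'm"
  assumes "n \<ge> 1" and "d \<ge> 1"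
    and rep: "is_Sd_rep d rho"
    and comp: "c \<in> compositions n d"
    and a: "Suc a < n"
    and v: "v \<in> invariants rho (young n d c)"
  shows "(Suc 0 \<le> c (Suc a) \<longrightarrow>
      (let u = of_nat (c (Suc a)) *s ((1 / of_nat (card (young n d (etil a c)))) *s
                 (\<Sum>w\<in>young n d (etil a c). rho w *v v))
       in u \<in> invariants rho (young n d (etil a c)) \<and>
          Eop d a (Phi n d rho (single c v)) = Phi n d rho (single (etil a c) u))) \<and>
    (Suc 0 \<le> c a \<longrightarrow>
      (let u = of_nat (c a) *s ((1 / of_nat (card (young n d (ftil a c)))) *s
                 (\<Sum>w\<in>young n d (ftil a c). rho w *v v))
       in u \<in> invariants rho (young n d (ftil a c)) \<and>
          Fop d a (Phi n d rho (single c v)) = Phi n d rho (single (ftil a c) u)))"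
proof (intro conjI impI)
  assume "Suc 0 \<le> c (Suc a)"
  then have ca: "1 \<le> c (Suc a)"
    by simp
  note thetaw = thetaw_etil[OF comp a ca]
  show "let u = of_nat (c (Suc a)) *s ((1 / of_nat (card (young n d (etil a c)))) *s
                 (\<Sum>w\<in>young n d (etil a c). rho w *v v))
       in u \<in> invariants rho (young n d (etil a c)) \<and>
          Eop d a (Phi n d rho (single c v)) = Phi n d rho (single (etil a c) u)"
    unfolding Let_def Eop_eq_matrix_unit_op
    using invariants_scale[OF invariants_scale[OF young_sum_in_invariants[OF rep]]]
      matrix_unit_op_Phi_single[OF rep comp etil_in_compositions[OF comp a ca] v thetaw(1,2) a thetaw(3)]
    by blast
next
  assume "Suc 0 \<le> c a"
  then have ca: "1 \<le> c a"
    by simp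
  note thetaw = thetaw_ftil[OF comp a ca]
  show "let u = of_nat (c a) *s ((1 / of_nat (card (young n d (ftil a c)))) *s
                 (\<Sum>w\<in>young n d (ftil a c). rho w *v v))
       in u \<in> invariants rho (young n d (ftil a c)) \<and>
          Fop d a (Phi n d rho (single c v)) = Phi n d rho (single (ftil a c) u)"
    unfolding Let_def Fop_eq_matrix_unit_op
    using invariants_scale[OF invariants_scale[OF young_sum_in_invariants[OF rep]]]
      matrix_unit_op_Phi_single[OF rep comp ftil_in_compositions[OF comp a ca] v thetaw(1,2) Suc_lessD[OF a] thetaw(3)]
    by blast
qed

end
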